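(* Let $\mathcal C\subseteq2^{[n]}$ be a nonempty code. For all $\sigma,\tau\subseteq[n]$, $x^\sigma y^\tau\in I_{\Gamma(\mathcal C)}$ if and only if $x^\sigma(1-x)^\tau\in I_{\mathcal C}$. Consequently, $$I_{\Gamma(\mathcal C)}=\langle x^\sigma y^\tau : x^\sigma(1-x)^\tau\in CF(J_{\mathcal C})\rangle+\langle x_iy_i: i\in[n]\rangle.$$
   Context: Let $R=\mathbb F_2[x_1,\dots,x_n]$ and $S=\mathbb F_2[x_1,\dots,x_n,y_1,\dots,y_n]$. For $\sigma,\tau\subseteq[n]$ write $x^\sigma=\prod_{i\in\sigma}x_i$, $y^\tau=\prod_{j\in\tau}y_j$, $(1-x)^\tau=\prod_{j\in\tau}(1-x_j)$; polynomials $x^\sigma(1-x)^\tau$ are pseudo-monomials. A polynomial $f\in R$ is evaluated at $\sigma\subseteq[n]$ by setting $x_i=1$ for $i\in\sigma$ and $x_i=0$ otherwise. $I_{\mathcal C}=\{f\in R: f(\sigma)=0\ \forall\sigma\in\mathcal C\}$; the neural ideal is $J_{\mathcal C}=\langle x^\sigma(1-x)^{[n]\setminus\sigma}:\sigma\notin\mathcal C\rangle$; the canonical form $CF(J_{\mathcal C})$ is the set of pseudo-monomials $f\in J_{\mathcal C}$ such that no other pseudo-monomial in $J_{\mathcal C}$ divides $f$. The polar complex $\Gamma(\mathcal C)$ is the simplicial complex on $[n]\sqcup\{\bar1,\dots,\bar n\}$ of all subsets of $\sigma\sqcup\{\bar i:i\notin\sigma\}$, $\sigma\in\mathcal C$;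 its Stanley–Reisner ideal (identifying vertex $i$ with $x_i$ and $\bar i$ with $y_i$) is $I_{\Gamma(\mathcal C)}=\langle x^\sigma y^\tau:\sigma\sqcup\{\bar j:j\in\tau\}\notin\Gamma(\mathcal C)\rangle\subseteq S$. *)

theory Defs
  imports "HOL-Library.Poly_Mapping" "HOL-Library.Z2"
begin

text \<open>Multivariate polynomials over F_2 (type bit) in variables of type 'v:
  maps from finitely supported exponent vectors to coefficients.
  The ground set [n] is the finite type 'n; R has variables x_i (i :: 'n),
  S has variables Inl i (= x_i) and Inr i (= y_i).\<close>

type_synonym 'v mpoly2 = "('v \<Rightarrow>\<^sub>0 nat) \<Rightarrow>\<^sub>0 bit"

definition Var :: "'v \<Rightarrow> 'v mpoly2" where
  "Var i = Poly_Mapping.single (Poly_Mapping.single i 1) 1"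

definition ideal_gen :: "'a::comm_ring_1 set \<Rightarrow> 'a set" where
  "ideal_gen G = {p. \<exists>F c. finite F \<and> F \<subseteq> G \<and> p = (\<Sum>f\<in>F. c f * f)}"

definition xmon :: "'n set \<Rightarrow> 'n mpoly2" where
  "xmon \<sigma> = (\<Prod>i\<in>\<sigma>. Var i)"

definition omx :: "'n set \<Rightarrow> 'n mpoly2" where
  "omx \<tau> = (\<Prod>j\<in>\<tau>. 1 - Var j)"

definition pmon :: "'n set \<Rightarrow> 'n set \<Rightarrow> 'n mpoly2" where
  "pmon \<sigma> \<tau> = xmon \<sigma> * omx \<tau>"

definition pseudo_monomial :: "'n::finite mpoly2 \<Rightarrow> bool" where
  "pseudo_monomial f \<longleftrightarrow> (\<exists>\<sigma> \<tau>. \<sigma> \<inter> \<tau> = {} \<and> f = pmon \<sigma> \<tau>)"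

definition eval_at :: "'n::finite mpoly2 \<Rightarrow> 'n set \<Rightarrow> bit" where
  "eval_at f \<sigma> = (\<Sum>m\<in>Poly_Mapping.keys f.
      Poly_Mapping.lookup f m * (\<Prod>i\<in>UNIV. (if i \<in> \<sigma> then 1 else 0) ^ Poly_Mapping.lookup m i))"

definition I_code :: "'n::finite set set \<Rightarrow> 'n mpoly2 set" where
  "I_code C = {f. \<forall>\<sigma>\<in>C. eval_at f \<sigma> = 0}"

definition neural_ideal :: "'n::finite set set \<Rightarrow> 'n mpoly2 set" where
  "neural_ideal C = ideal_gen {pmon \<sigma> (UNIV - \<sigma>) | \<sigma>. \<sigma> \<notin> C}"

definition canonical_form :: "'n::finite set set \<Rightarrow> 'n mpoly2 set" where
  "canonical_form C = {f. pseudo_monomial f \<and> f \<in> neural_ideal C \<and>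
      (\<forall>g. pseudo_monomial g \<and> g \<in> neural_ideal C \<and> g \<noteq> f \<longrightarrow> \<not> g dvd f)}"

text \<open>Polar complex on vertex set 'n + 'n (Inl i = i, Inr i = bar i).\<close>
definition polar_complex :: "'n set set \<Rightarrow> ('n + 'n) set set" where
  "polar_complex C = {F. \<exists>\<sigma>\<in>C. F \<subseteq> Inl ` \<sigma> \<union> Inr ` (UNIV - \<sigma>)}"

definition xymon :: "'n set \<Rightarrow> 'n set \<Rightarrow> ('n + 'n) mpoly2" where
  "xymon \<sigma> \<tau> = (\<Prod>i\<in>\<sigma>. Var (Inl i)) * (\<Prod>j\<in>\<tau>. Var (Inr j))"

definition SR_ideal_polar :: "'n::finite set set \<Rightarrow> ('n + 'n) mpoly2 set" where
  "SR_ideal_polar C = ideal_gen {xymon \<sigma> \<tau> | \<sigma> \<tau>.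
      Inl ` \<sigma> \<union> Inr ` \<tau> \<notin> polar_complex C}"

end

theory Submission
  imports Defs
begin

text \<open>Evaluation at \<open>\<rho>\<close> is a ring homomorphism, and the pseudo-monomial \<open>pmon \<sigma> \<tau>\<close>
  evaluates to 1 at \<open>\<rho>\<close> exactly when \<open>\<sigma> \<subseteq> \<rho>\<close> and \<open>\<tau> \<inter> \<rho> = {}\<close>, i.e. when \<open>\<sigma> \<union> \<bar>\<tau>\<close>
  is contained in the facet of the polar complex belonging to \<open>\<rho>\<close>. Hence \<open>pmon \<sigma> \<tau>\<close> vanishes
  on the code iff \<open>\<sigma> \<union> \<bar>\<tau>\<close> is a non-face. The same characterises membership of the
  monomial \<open>xymon \<sigma> \<tau>\<close> in the Stanley-Reisner ideal: one direction is its definition, for the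
  other evaluate at the indicator of the face \<open>\<sigma> \<union> \<bar>\<tau>\<close>, where every generator vanishes
  because the polar complex is closed under subsets.

  For the generators: if \<open>\<sigma> \<inter> \<tau> \<noteq> {}\<close> then \<open>xymon \<sigma> \<tau>\<close> is a multiple of some \<open>x\<^sub>i y\<^sub>i\<close>.
  Otherwise \<open>pmon \<sigma> \<tau>\<close> vanishes on the code and lies in the neural ideal, since splitting
  along \<open>1 = x\<^sub>j + (1 - x\<^sub>j)\<close> for every \<open>j \<notin> \<sigma> \<union> \<tau>\<close> writes it as a sum of the generators
  \<open>pmon \<rho> (UNIV - \<rho>)\<close>, \<open>\<rho> \<notin> C\<close>. A pseudo-monomial of the neural ideal dividing it with the fewest
  variables is in the canonical form; as divisibility of pseudo-monomials is inclusion of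
  both index sets, \<open>xymon \<sigma> \<tau>\<close> is a multiple of the corresponding generator.\<close>

definition eval_monomial :: "'v set \<Rightarrow> ('v \<Rightarrow>\<^sub>0 nat) \<Rightarrow> bit" where
  "eval_monomial \<rho> m = (\<Prod>i\<in>UNIV. (if i \<in> \<rho> then 1 else 0) ^ Poly_Mapping.lookup m i)"

lemma eval_monomial_add: "eval_monomial \<rho> (m + m') = eval_monomial \<rho> m * eval_monomial \<rho> m'"
  unfolding eval_monomial_def lookup_add power_add by (rule prod.distrib)

lemma eval_at_superset:
  fixes f :: "'v::finite mpoly2"
  assumes "finite S" "Poly_Mapping.keys f \<subseteq> S"
  shows "eval_at f \<rho> = (\<Sum>m\<in>S. Poly_Mapping.lookup f m * eval_monomial \<rho> m)"
  unfolding eval_at_def eval_monomial_def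
  by (rule sum.mono_neutral_left) (use assms in \<open>auto simp: in_keys_iff\<close>)

lemma eval_at_zero [simp]: "eval_at (0 :: 'v::finite mpoly2) \<rho> = 0"
  by (simp add: eval_at_def)

lemma eval_at_single: "eval_at (Poly_Mapping.single m c :: 'v::finite mpoly2) \<rho> = c * eval_monomial \<rho> m"
  by (simp add: eval_at_def eval_monomial_def)

lemma eval_at_add: "eval_at (f + g :: 'v::finite mpoly2) \<rho> = eval_at f \<rho> + eval_at g \<rho>"
proof -
  let ?S = "Poly_Mapping.keys f \<union> Poly_Mapping.keys g"
  have "eval_at (f + g) \<rho> = (\<Sum>m\<in>?S. Poly_Mapping.lookup (f + g) m * eval_monomial \<rho> m)"
    by (rule eval_at_superset) (use keys_add[of f g] in auto)
  also have "\<dots> = (\<Sum>m\<in>?S. Poly_Mapping.lookup f m * eval_monomial \<rho> m)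
                 + (\<Sum>m\<in>?S. Poly_Mapping.lookup g m * eval_monomial \<rho> m)"
    by (simp only: lookup_add distrib_right sum.distrib)
  also have "\<dots> = eval_at f \<rho> + eval_at g \<rho>"
    by (subst (1 2) eval_at_superset[where S = ?S]) auto
  finally show ?thesis .
qed

lemma eval_at_diff: "eval_at (f - g :: 'v::finite mpoly2) \<rho> = eval_at f \<rho> - eval_at g \<rho>"
  using eval_at_add[of "f - g" g] by (metis add_diff_cancel diff_add_cancel)

lemma eval_at_sum: "eval_at (\<Sum>x\<in>A. F x :: 'v::finite mpoly2) \<rho> = (\<Sum>x\<in>A. eval_at (F x) \<rho>)"
  by (induction A rule: infinite_finite_induct) (auto simp: eval_at_add)

lemma poly_mapping_sum_single_keys:
  "f = (\<Sum>m\<in>Poly_Mapping.keys f. Poly_Mapping.single m (Poly_Mapping.lookup f m))"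
proof -
  have lookup_sum: "finite I \<Longrightarrow>
      Poly_Mapping.lookup (\<Sum>m\<in>I. Poly_Mapping.single m (Poly_Mapping.lookup f m)) j
        = (if j \<in> I then Poly_Mapping.lookup f j else 0)" for I j
    by (induction I rule: finite_induct) (auto simp: lookup_single lookup_add when_def)
  show ?thesis
    by (rule poly_mapping_eqI) (simp add: lookup_sum in_keys_iff)
qed

lemma eval_at_mult: "eval_at (f * g :: 'v::finite mpoly2) \<rho> = eval_at f \<rho> * eval_at g \<rho>"
proof -
  have "f * g = (\<Sum>m\<in>Poly_Mapping.keys f. \<Sum>m'\<in>Poly_Mapping.keys g.
      Poly_Mapping.single (m + m') (Poly_Mapping.lookup f m * Poly_Mapping.lookup g m'))"
    by (subst (1 2) poly_mapping_sum_single_keys) (simp only: sum_product mult_single)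
  then have "eval_at (f * g) \<rho> = (\<Sum>m\<in>Poly_Mapping.keys f. \<Sum>m'\<in>Poly_Mapping.keys g.
      (Poly_Mapping.lookup f m * eval_monomial \<rho> m) * (Poly_Mapping.lookup g m' * eval_monomial \<rho> m'))"
    by (simp only: eval_at_sum eval_at_single eval_monomial_add mult_ac)
  also have "\<dots> = eval_at f \<rho> * eval_at g \<rho>"
    by (simp only: eval_at_def eval_monomial_def sum_product)
  finally show ?thesis .
qed

lemma eval_at_one [simp]: "eval_at (1 :: 'v::finite mpoly2) \<rho> = 1"
  by (simp flip: single_one add: eval_at_single eval_monomial_def)

lemma eval_at_prod: "eval_at (\<Prod>x\<in>A. F x :: 'v::finite mpoly2) \<rho> = (\<Prod>x\<in>A. eval_at (F x) \<rho>)"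
  by (induction A rule: infinite_finite_induct) (auto simp: eval_at_mult)

lemma eval_at_Var: "eval_at (Var i :: 'v::finite mpoly2) \<rho> = (if i \<in> \<rho> then 1 else 0)"
proof -
  have "eval_monomial \<rho> (Poly_Mapping.single i 1)
      = (\<Prod>k\<in>UNIV. if k = i then (if i \<in> \<rho> then 1 else 0) else 1)"
    unfolding eval_monomial_def by (rule prod.cong) (auto simp: lookup_single when_def)
  then show ?thesis by (simp add: Var_def eval_at_single)
qed

lemma prod_indicator_bit:
  "finite A \<Longrightarrow> (\<Prod>i\<in>A. (if P i then 1 else 0 :: bit)) = (if \<forall>i\<in>A. P i then 1 else 0)"
  by (induction A rule: finite_induct) auto

lemma eval_at_pmon:
  "eval_at (pmon \<sigma> \<tau> :: 'n::finite mpoly2) \<rho> = (if \<sigma> \<subseteq> \<rho> \<and> \<tau> \<inter> \<rho> = {} then 1 else 0)"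
proof -
  have "eval_at (xmon \<sigma> :: 'n mpoly2) \<rho> = (if \<forall>i\<in>\<sigma>. i \<in> \<rho> then 1 else 0)"
    unfolding xmon_def by (simp only: eval_at_prod eval_at_Var prod_indicator_bit finite)
  moreover have "eval_at (omx \<tau> :: 'n mpoly2) \<rho> = (\<Prod>j\<in>\<tau>. (if j \<notin> \<rho> then 1 else 0))"
    unfolding omx_def eval_at_prod by (rule prod.cong) (auto simp: eval_at_diff eval_at_Var)
  ultimately show ?thesis
    unfolding pmon_def eval_at_mult by (auto simp: prod_indicator_bit)
qed

lemma eval_at_xymon:
  "eval_at (xymon \<sigma> \<tau> :: ('n::finite + 'n) mpoly2) \<rho> = (if Inl ` \<sigma> \<union> Inr ` \<tau> \<subseteq> \<rho> then 1 else 0)"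
  unfolding xymon_def eval_at_mult
  by (auto simp: eval_at_prod eval_at_Var prod_indicator_bit)

lemma ideal_gen_base: "g \<in> G \<Longrightarrow> g \<in> ideal_gen G"
  unfolding ideal_gen_def by (intro CollectI exI[of _ "{g}"] exI[of _ "\<lambda>_. 1"]) simp

lemma ideal_gen_zero: "0 \<in> ideal_gen G"
  unfolding ideal_gen_def by (intro CollectI exI[of _ "{}"]) simp

lemma ideal_gen_add:
  assumes "p \<in> ideal_gen G" "q \<in> ideal_gen G"
  shows "p + q \<in> ideal_gen G"
proof -
  obtain F1 c1 where F1: "finite F1" "F1 \<subseteq> G" "p = (\<Sum>f\<in>F1. c1 f * f)"
    using assms(1) unfolding ideal_gen_def by blast
  obtain F2 c2 where F2: "finite F2" "F2 \<subseteq> G" "q = (\<Sum>f\<in>F2. c2 f * f)"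
    using assms(2) unfolding ideal_gen_def by blast
  define c where "c f = (if f \<in> F1 then c1 f else 0) + (if f \<in> F2 then c2 f else 0)" for f
  have "(\<Sum>f\<in>F1 \<union> F2. c f * f)
      = (\<Sum>f\<in>F1 \<union> F2. if f \<in> F1 then c1 f * f else 0) + (\<Sum>f\<in>F1 \<union> F2. if f \<in> F2 then c2 f * f else 0)"
    unfolding c_def distrib_right sum.distrib[symmetric] by (rule sum.cong) simp_all
  also have "\<dots> = p + q"
    using F1 F2 by (simp add: sum.If_cases Int_absorb1 Int_absorb2)
  finally show ?thesis
    unfolding ideal_gen_def using F1 F2 by (intro CollectI exI[of _ "F1 \<union> F2"] exI[of _ c]) auto
qed

lemma ideal_gen_mult_left:
  assumes "p \<in> ideal_gen G"
  shows "r * p \<in> ideal_gen G"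
proof -
  obtain F c where F: "finite F" "F \<subseteq> G" "p = (\<Sum>f\<in>F. c f * f)"
    using assms unfolding ideal_gen_def by blast
  then have "r * p = (\<Sum>f\<in>F. (r * c f) * f)"
    by (simp add: sum_distrib_left mult_ac)
  then show ?thesis
    unfolding ideal_gen_def using F by (intro CollectI exI[of _ F] exI[of _ "\<lambda>f. r * c f"]) simp
qed

lemma ideal_gen_mult_right: "p \<in> ideal_gen G \<Longrightarrow> p * r \<in> ideal_gen G"
  using ideal_gen_mult_left[of p G r] by (simp add: mult.commute)

lemma ideal_gen_subset:
  assumes "G \<subseteq> ideal_gen H"
  shows "ideal_gen G \<subseteq> ideal_gen H"
proof
  fix p assume "p \<in> ideal_gen G"
  then obtain F c where F: "finite F" "F \<subseteq> G" "p = (\<Sum>f\<in>F. c f * f)"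
    unfolding ideal_gen_def by blast
  have "F \<subseteq> G \<Longrightarrow> (\<Sum>f\<in>F. c f * f) \<in> ideal_gen H"
    using F(1) by (induction F rule: finite_induct)
      (use assms in \<open>auto simp: ideal_gen_zero ideal_gen_add ideal_gen_mult_left\<close>)
  then show "p \<in> ideal_gen H" using F by simp
qed

lemma eval_at_ideal_gen_eq_0:
  fixes G :: "'v::finite mpoly2 set"
  assumes "p \<in> ideal_gen G" "\<And>g. g \<in> G \<Longrightarrow> eval_at g \<rho> = 0"
  shows "eval_at p \<rho> = 0"
proof -
  obtain F c where F: "finite F" "F \<subseteq> G" "p = (\<Sum>f\<in>F. c f * f)"
    using assms(1) unfolding ideal_gen_def by blast
  then have "eval_at p \<rho> = (\<Sum>f\<in>F. eval_at (c f) \<rho> * eval_at f \<rho>)"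
    by (simp only: eval_at_sum eval_at_mult)
  also have "\<dots> = 0"
    using F assms(2) by (intro sum.neutral) auto
  finally show ?thesis .
qed

lemma Inl_Inr_image_subset_facet_iff:
  "Inl ` \<sigma> \<union> Inr ` \<tau> \<subseteq> Inl ` \<rho> \<union> Inr ` (UNIV - \<rho>) \<longleftrightarrow> \<sigma> \<subseteq> \<rho> \<and> \<tau> \<inter> \<rho> = {}"
  by (auto simp: image_iff)

lemma polar_complex_face_iff:
  "Inl ` \<sigma> \<union> Inr ` \<tau> \<in> polar_complex C \<longleftrightarrow> (\<exists>\<rho>\<in>C. \<sigma> \<subseteq> \<rho> \<and> \<tau> \<inter> \<rho> = {})"
  unfolding polar_complex_def mem_Collect_eq Inl_Inr_image_subset_facet_iff by (rule refl)

lemma polar_complex_subset_closed: "F \<in> polar_complex C \<Longrightarrow> F' \<subseteq> F \<Longrightarrow> F' \<in> polar_complex C"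
  unfolding polar_complex_def by blast

lemma pmon_in_I_code_iff:
  "pmon \<sigma> \<tau> \<in> I_code C \<longleftrightarrow> \<not> (\<exists>\<rho>\<in>C. \<sigma> \<subseteq> \<rho> \<and> \<tau> \<inter> \<rho> = {})"
  unfolding I_code_def by (auto simp: eval_at_pmon)

lemma xymon_in_SR_ideal_polar_iff:
  fixes C :: "'n::finite set set"
  shows "xymon \<sigma> \<tau> \<in> SR_ideal_polar C \<longleftrightarrow> Inl ` \<sigma> \<union> Inr ` \<tau> \<notin> polar_complex C"
proof
  assume "Inl ` \<sigma> \<union> Inr ` \<tau> \<notin> polar_complex C"
  then show "xymon \<sigma> \<tau> \<in> SR_ideal_polar C"
    unfolding SR_ideal_polar_def by (intro ideal_gen_base) blast
next
  assume member: "xymon \<sigma> \<tau> \<in> SR_ideal_polar C"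
  show "Inl ` \<sigma> \<union> Inr ` \<tau> \<notin> polar_complex C"
  proof
    assume face: "Inl ` \<sigma> \<union> Inr ` \<tau> \<in> polar_complex C"
    have "eval_at (xymon \<sigma> \<tau>) (Inl ` \<sigma> \<union> Inr ` \<tau>) = 0"
      using member unfolding SR_ideal_polar_def
    proof (rule eval_at_ideal_gen_eq_0)
      fix g assume "g \<in> {xymon a b |a b. Inl ` a \<union> Inr ` b \<notin> polar_complex C}"
      then obtain a b where g: "g = xymon a b" "Inl ` a \<union> Inr ` b \<notin> polar_complex C"
        by blast
      with face have "\<not> Inl ` a \<union> Inr ` b \<subseteq> Inl ` \<sigma> \<union> Inr ` \<tau>"
        using polar_complex_subset_closed by blast
      then show "eval_at g (Inl ` \<sigma> \<union> Inr ` \<tau>) = 0"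
        unfolding g(1) eval_at_xymon by simp
    qed
    then show False by (simp add: eval_at_xymon)
  qed
qed

lemma xymon_in_SR_ideal_polar_iff_pmon_in_I_code:
  "xymon \<sigma> \<tau> \<in> SR_ideal_polar C \<longleftrightarrow> pmon \<sigma> \<tau> \<in> I_code C"
  by (simp only: xymon_in_SR_ideal_polar_iff pmon_in_I_code_iff polar_complex_face_iff)

lemma neural_ideal_subset_I_code: "neural_ideal C \<subseteq> I_code C"
proof
  fix f assume f: "f \<in> neural_ideal C"
  have "eval_at f \<rho> = 0" if "\<rho> \<in> C" for \<rho>
    using f unfolding neural_ideal_def
  proof (rule eval_at_ideal_gen_eq_0)
    fix g assume "g \<in> {pmon \<sigma> (UNIV - \<sigma>) |\<sigma>. \<sigma> \<notin> C}"
    then obtain \<sigma> where "g = pmon \<sigma> (UNIV - \<sigma>)" "\<sigma> \<notin> C" by blast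
    moreover have "\<sigma> \<subseteq> \<rho> \<and> (UNIV - \<sigma>) \<inter> \<rho> = {} \<longleftrightarrow> \<rho> = \<sigma>" by blast
    ultimately show "eval_at g \<rho> = 0" using that by (auto simp: eval_at_pmon)
  qed
  then show "f \<in> I_code C" unfolding I_code_def by blast
qed

lemma pmon_split_var:
  fixes \<sigma> \<tau> :: "'n::finite set"
  assumes "j \<notin> \<sigma>" "j \<notin> \<tau>"
  shows "pmon \<sigma> \<tau> = pmon (insert j \<sigma>) \<tau> + pmon \<sigma> (insert j \<tau>)"
proof -
  have "pmon (insert j \<sigma>) \<tau> = Var j * pmon \<sigma> \<tau>"
    using assms unfolding pmon_def xmon_def omx_def by (simp add: mult.assoc)
  moreover have "pmon \<sigma> (insert j \<tau>) = (1 - Var j) * pmon \<sigma> \<tau>"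
    using assms unfolding pmon_def xmon_def omx_def by (simp add: mult_ac)
  ultimately show ?thesis by (simp flip: distrib_right)
qed

lemma pmon_in_neural_ideal_if_in_I_code:
  fixes C :: "'n::finite set set"
  shows "\<sigma> \<inter> \<tau> = {} \<Longrightarrow> pmon \<sigma> \<tau> \<in> I_code C \<Longrightarrow> pmon \<sigma> \<tau> \<in> neural_ideal C"
proof (induction "card (UNIV - (\<sigma> \<union> \<tau>))" arbitrary: \<sigma> \<tau>)
  case 0
  then have \<tau>: "\<tau> = UNIV - \<sigma>" by auto
  with 0 have "\<sigma> \<notin> C" by (auto simp: pmon_in_I_code_iff)
  then show ?case unfolding neural_ideal_def \<tau> by (intro ideal_gen_base) blast
next
  case (Suc k)
  then have "UNIV - (\<sigma> \<union> \<tau>) \<noteq> {}" by force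
  then obtain j where j: "j \<notin> \<sigma>" "j \<notin> \<tau>" by blast
  have "UNIV - (insert j \<sigma> \<union> \<tau>) = (UNIV - (\<sigma> \<union> \<tau>)) - {j}"
    "UNIV - (\<sigma> \<union> insert j \<tau>) = (UNIV - (\<sigma> \<union> \<tau>)) - {j}" by blast+
  with Suc.hyps(2) j have k: "k = card (UNIV - (insert j \<sigma> \<union> \<tau>))" "k = card (UNIV - (\<sigma> \<union> insert j \<tau>))"
    by simp_all
  have "insert j \<sigma> \<inter> \<tau> = {}" "pmon (insert j \<sigma>) \<tau> \<in> I_code C"
    "\<sigma> \<inter> insert j \<tau> = {}" "pmon \<sigma> (insert j \<tau>) \<in> I_code C"
    using Suc.prems j by (auto simp: pmon_in_I_code_iff)
  then have "pmon (insert j \<sigma>) \<tau> \<in> neural_ideal C" "pmon \<sigma> (insert j \<tau>) \<in> neural_ideal C"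
    using Suc.hyps(1)[OF k(1)] Suc.hyps(1)[OF k(2)] by blast+
  then show ?case
    unfolding pmon_split_var[OF j] neural_ideal_def by (rule ideal_gen_add)
qed

lemma pmon_dvd_pmon_imp_subset:
  fixes s t :: "'n::finite set"
  assumes "pmon a b dvd pmon s t" "s \<inter> t = {}"
  shows "a \<subseteq> s \<and> b \<subseteq> t"
proof -
  obtain k where k: "pmon s t = pmon a b * k" using assms(1) by blast
  have "eval_at (pmon s t) \<rho> = 1" if "\<rho> = s \<or> \<rho> = UNIV - t" for \<rho>
    using that assms(2) by (auto simp: eval_at_pmon)
  then have "eval_at (pmon a b) \<rho> = 1" if "\<rho> = s \<or> \<rho> = UNIV - t" for \<rho>
    using that unfolding k eval_at_mult by (metis mult_zero_left bit_not_one_iff)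
  from this[of s] this[of "UNIV - t"] show ?thesis
    by (auto simp: eval_at_pmon split: if_splits)
qed

lemma canonical_form_divisor_exists:
  fixes C :: "'n::finite set set"
  assumes "\<sigma> \<inter> \<tau> = {}" "pmon \<sigma> \<tau> \<in> neural_ideal C"
  obtains a b where "a \<subseteq> \<sigma>" "b \<subseteq> \<tau>" "pmon a b \<in> canonical_form C"
proof -
  define P where "P = (\<lambda>(a, b). a \<subseteq> \<sigma> \<and> b \<subseteq> \<tau> \<and> pmon a b \<in> neural_ideal C)"
  have "P (\<sigma>, \<tau>)" using assms unfolding P_def by auto
  then obtain a b where Pab: "P (a, b)"
    and min: "\<And>a' b'. P (a', b') \<Longrightarrow> card a + card b \<le> card a' + card b'"
    using ex_has_least_nat[of P "(\<sigma>, \<tau>)" "\<lambda>(a, b). card a + card b"] by fastforce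
  then have ab: "a \<subseteq> \<sigma>" "b \<subseteq> \<tau>" "pmon a b \<in> neural_ideal C" "a \<inter> b = {}"
    using assms(1) unfolding P_def by auto
  have "pmon a b \<in> canonical_form C"
    unfolding canonical_form_def
  proof (intro CollectI conjI allI impI)
    show "pseudo_monomial (pmon a b)" unfolding pseudo_monomial_def using ab(4) by blast
    show "pmon a b \<in> neural_ideal C" by (fact ab(3))
    fix g assume g: "pseudo_monomial g \<and> g \<in> neural_ideal C \<and> g \<noteq> pmon a b"
    then obtain a' b' where g_eq: "g = pmon a' b'" unfolding pseudo_monomial_def by blast
    show "\<not> g dvd pmon a b"
    proof
      assume "g dvd pmon a b"
      then have sub: "a' \<subseteq> a" "b' \<subseteq> b"
        using pmon_dvd_pmon_imp_subset ab(4) unfolding g_eq by blast+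
      with ab g g_eq have "P (a', b')" unfolding P_def by auto
      then have "card a + card b \<le> card a' + card b'" by (rule min)
      moreover have "card a' \<le> card a" "card b' \<le> card b"
        using sub by (simp_all add: card_mono)
      ultimately have "a' = a" "b' = b"
        using sub by (simp_all add: card_subset_eq)
      with g g_eq show False by simp
    qed
  qed
  with ab that show ?thesis by blast
qed

lemma xymon_factor:
  fixes a b s t :: "'n::finite set"
  assumes "a \<subseteq> s" "b \<subseteq> t"
  shows "xymon s t = xymon a b * xymon (s - a) (t - b)"
proof -
  have "(\<Prod>i\<in>s. Var (Inl i) :: ('n + 'n) mpoly2) = (\<Prod>i\<in>a. Var (Inl i)) * (\<Prod>i\<in>s - a. Var (Inl i))"
    "(\<Prod>i\<in>t. Var (Inr i) :: ('n + 'n) mpoly2) = (\<Prod>i\<in>b. Var (Inr i)) * (\<Prod>i\<in>t - b. Var (Inr i))"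
    using assms by (simp_all add: prod.subset_diff mult.commute)
  then show ?thesis unfolding xymon_def by (simp add: mult_ac)
qed

lemma non_face_xymon_in_ideal_gen_canonical_form:
  fixes C :: "'n::finite set set"
  assumes "Inl ` \<sigma> \<union> Inr ` \<tau> \<notin> polar_complex C"
  shows "xymon \<sigma> \<tau> \<in> ideal_gen ({xymon a b | a b. pmon a b \<in> canonical_form C}
                                        \<union> {Var (Inl i) * Var (Inr i) | i. True})"
    (is "_ \<in> ideal_gen ?G")
proof (cases "\<sigma> \<inter> \<tau> = {}")
  case True
  have "pmon \<sigma> \<tau> \<in> I_code C"
    using assms by (simp add: pmon_in_I_code_iff polar_complex_face_iff)
  then have "pmon \<sigma> \<tau> \<in> neural_ideal C"
    by (rule pmon_in_neural_ideal_if_in_I_code[OF True])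
  then obtain a b where ab: "a \<subseteq> \<sigma>" "b \<subseteq> \<tau>" "pmon a b \<in> canonical_form C"
    using canonical_form_divisor_exists[OF True] by blast
  then have "xymon a b \<in> ideal_gen ?G" by (intro ideal_gen_base) blast
  then show ?thesis unfolding xymon_factor[OF ab(1,2)] by (rule ideal_gen_mult_right)
next
  case False
  then obtain i where i: "{i} \<subseteq> \<sigma>" "{i} \<subseteq> \<tau>" by blast
  have "xymon {i} {i} = Var (Inl i) * Var (Inr i)" by (simp add: xymon_def)
  then have "xymon {i} {i} \<in> ideal_gen ?G" by (intro ideal_gen_base) blast
  then show ?thesis unfolding xymon_factor[OF i] by (rule ideal_gen_mult_right)
qed

lemma canonical_form_generators_subset_SR_ideal_polar:
  fixes C :: "'n::finite set set"
  shows "{xymon a b | a b. pmon a b \<in> canonical_form C} \<union> {Var (Inl i) * Var (Inr i) | i. True}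
    \<subseteq> SR_ideal_polar C"
proof (intro subsetI, elim UnE CollectE exE conjE)
  fix g a b assume "g = xymon a b" "pmon a b \<in> canonical_form C"
  moreover have "canonical_form C \<subseteq> I_code C"
    using neural_ideal_subset_I_code unfolding canonical_form_def by blast
  ultimately show "g \<in> SR_ideal_polar C"
    by (auto simp: xymon_in_SR_ideal_polar_iff_pmon_in_I_code)
next
  fix g and i :: 'n assume "g = Var (Inl i) * Var (Inr i)"
  then have "g = xymon {i} {i}" by (simp add: xymon_def)
  moreover have "Inl ` {i} \<union> Inr ` {i} \<notin> polar_complex C"
    by (simp only: polar_complex_face_iff) blast
  ultimately show "g \<in> SR_ideal_polar C"
    by (simp add: xymon_in_SR_ideal_polar_iff)
qed

theorem lemma6p7:
  fixes C :: "'n::finite set set"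
  assumes "C \<noteq> {}"
  shows "(\<forall>\<sigma> \<tau>. xymon \<sigma> \<tau> \<in> SR_ideal_polar C \<longleftrightarrow> pmon \<sigma> \<tau> \<in> I_code C)
    \<and> SR_ideal_polar C =
        ideal_gen ({xymon \<sigma> \<tau> | \<sigma> \<tau>. pmon \<sigma> \<tau> \<in> canonical_form C}
                   \<union> {Var (Inl i) * Var (Inr i) | i. True})"
proof (intro conjI allI equalityI)
  show "xymon \<sigma> \<tau> \<in> SR_ideal_polar C \<longleftrightarrow> pmon \<sigma> \<tau> \<in> I_code C" for \<sigma> \<tau>
    by (rule xymon_in_SR_ideal_polar_iff_pmon_in_I_code)
  show "ideal_gen ({xymon \<sigma> \<tau> | \<sigma> \<tau>. pmon \<sigma> \<tau> \<in> canonical_form C}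
                   \<union> {Var (Inl i) * Var (Inr i) | i. True}) \<subseteq> SR_ideal_polar C"
    using canonical_form_generators_subset_SR_ideal_polar[of C]
    unfolding SR_ideal_polar_def by (rule ideal_gen_subset)
  show "SR_ideal_polar C \<subseteq> ideal_gen ({xymon \<sigma> \<tau> | \<sigma> \<tau>. pmon \<sigma> \<tau> \<in> canonical_form C}
                   \<union> {Var (Inl i) * Var (Inr i) | i. True})"
    unfolding SR_ideal_polar_def
    by (rule ideal_gen_subset)
      (blast intro: non_face_xymon_in_ideal_gen_canonical_form)
qed

end
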